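(* Let $(G,\sigma)$ be a finite connected signed graph, $D$ the diameter and $\mathrm{vol}(G)=\sum_{x\in V}d_x$ the volume of $G$. Then for any $p>1$, the first (smallest) nonzero eigenvalue $\lambda_{p}^{\sigma}$ of the signed $p$-Laplacian $\Delta_p^{\sigma}$ satisfies \[ \lambda_{p}^{\sigma}\geq\frac{1}{(D+1)^{p-1}\mathrm{vol}(G)}. \]
   Context: $G=(V,E)$ is a finite simple connected graph with degrees $d_x$; $\sigma:E\to\{\pm1\}$, $\sigma_{xy}=\sigma(\{x,y\})$. For $p>1$, the signed $p$-Laplacian is $\Delta_{p}^{\sigma}f(x)=\frac{1}{d_{x}}\sum_{y\sim x}|\sigma_{xy}f(y)-f(x)|^{p-2}(\sigma_{xy}f(y)-f(x))$, with the convention $|t|^{p-2}t=0$ for $t=0$. A real $\lambda$ is an eigenvalue of $\Delta_p^\sigma$ if there is a nonzero $f:V\to\mathbb{R}$ with $-\Delta_{p}^{\sigma}f(x)=\lambda|f(x)|^{p-2}f(x)$ for all $x\in V$. *)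

theory Defs
  imports Complex_Main
begin

definition simple_graph :: "'a set \<Rightarrow> 'a set set \<Rightarrow> bool" where
  "simple_graph V E \<longleftrightarrow> finite V \<and> V \<noteq> {} \<and>
     (\<forall>e\<in>E. \<exists>x y. e = {x, y} \<and> x \<noteq> y \<and> x \<in> V \<and> y \<in> V)"

definition adj :: "'a set set \<Rightarrow> 'a \<Rightarrow> 'a \<Rightarrow> bool" where
  "adj E x y \<longleftrightarrow> {x, y} \<in> E"

definition degree :: "'a set \<Rightarrow> 'a set set \<Rightarrow> 'a \<Rightarrow> nat" where
  "degree V E x = card {y \<in> V. adj E x y}"

definition volume :: "'a set \<Rightarrow> 'a set set \<Rightarrow> nat" where
  "volume V E = (\<Sum>x\<in>V. degree V E x)"

text \<open>A walk is a nonempty list of vertices with consecutive entries adjacent;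
  its length (number of edges) is length xs - 1.\<close>

definition walk :: "'a set \<Rightarrow> 'a set set \<Rightarrow> 'a list \<Rightarrow> bool" where
  "walk V E xs \<longleftrightarrow> xs \<noteq> [] \<and> set xs \<subseteq> V \<and>
     (\<forall>i. Suc i < length xs \<longrightarrow> adj E (xs ! i) (xs ! Suc i))"

definition connected_graph :: "'a set \<Rightarrow> 'a set set \<Rightarrow> bool" where
  "connected_graph V E \<longleftrightarrow>
     (\<forall>x\<in>V. \<forall>y\<in>V. \<exists>xs. walk V E xs \<and> hd xs = x \<and> last xs = y)"

definition graph_dist :: "'a set \<Rightarrow> 'a set set \<Rightarrow> 'a \<Rightarrow> 'a \<Rightarrow> nat" where
  "graph_dist V E x y =
     (LEAST n. \<exists>xs. walk V E xs \<and> hd xs = x \<and> last xs = y \<and> length xs = Suc n)"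

definition diameter :: "'a set \<Rightarrow> 'a set set \<Rightarrow> nat" where
  "diameter V E = Max {graph_dist V E x y | x y. x \<in> V \<and> y \<in> V}"

definition signature :: "'a set set \<Rightarrow> ('a set \<Rightarrow> real) \<Rightarrow> bool" where
  "signature E \<sigma> \<longleftrightarrow> (\<forall>e\<in>E. \<sigma> e = 1 \<or> \<sigma> e = -1)"

definition phi_p :: "real \<Rightarrow> real \<Rightarrow> real" where
  "phi_p p t = (if t = 0 then 0 else \<bar>t\<bar> powr (p - 2) * t)"

definition signed_p_laplacian ::
  "'a set \<Rightarrow> 'a set set \<Rightarrow> ('a set \<Rightarrow> real) \<Rightarrow> real \<Rightarrow> ('a \<Rightarrow> real) \<Rightarrow> 'a \<Rightarrow> real" where
  "signed_p_laplacian V E \<sigma> p f x =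
     (1 / real (degree V E x)) *
     (\<Sum>y\<in>{y\<in>V. adj E x y}. phi_p p (\<sigma> {x, y} * f y - f x))"

definition is_eigenvalue ::
  "'a set \<Rightarrow> 'a set set \<Rightarrow> ('a set \<Rightarrow> real) \<Rightarrow> real \<Rightarrow> real \<Rightarrow> bool" where
  "is_eigenvalue V E \<sigma> p lam \<longleftrightarrow>
     (\<exists>f. (\<exists>x\<in>V. f x \<noteq> 0) \<and>
          (\<forall>x\<in>V. - signed_p_laplacian V E \<sigma> p f x = lam * phi_p p (f x)))"

end

theory Submission
  imports "HOL-Analysis.Convex" Defs
begin

text \<open>
  Summing \<open>f(x) \<phi>\<^sub>p(f(x) - \<sigma>\<^sub>x\<^sub>y f(y))\<close> over all oriented edges turns the eigenvalue equation into
  the energy identity \<open>\<Sum>\<^sub>x \<Sum>\<^sub>y\<^sub>~\<^sub>x \<bar>f(x) - \<sigma>\<^sub>x\<^sub>y f(y)\<bar>\<^sup>p = 2 \<lambda> \<Sum>\<^sub>x d\<^sub>x \<bar>f(x)\<bar>\<^sup>p\<close>; in particular \<open>\<lambda> > 0\<close>.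
  Some edge \<open>vw\<close> is frustrated, \<open>\<sigma>\<^sub>v\<^sub>w f(v) f(w) \<le> 0\<close>. A path without repeated vertices
  from a maximum point \<open>u\<close> of \<open>\<bar>f\<bar>\<close> through such an edge has at most \<open>D + 1\<close> edges, and along it
  the differences \<open>\<bar>f(x) - \<sigma>\<^sub>x\<^sub>y f(y)\<bar>\<close> add up to at least \<open>\<bar>f(u)\<bar>\<close>. The power mean inequality
  and the energy identity then give
  \<open>\<bar>f(u)\<bar>\<^sup>p \<le> (D + 1)\<^sup>p\<^sup>-\<^sup>1 \<lambda> \<Sum>\<^sub>x d\<^sub>x \<bar>f(x)\<bar>\<^sup>p \<le> (D + 1)\<^sup>p\<^sup>-\<^sup>1 \<lambda> vol(G) \<bar>f(u)\<bar>\<^sup>p\<close>.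
\<close>

fun walk_edges :: "'a list \<Rightarrow> ('a \<times> 'a) list" where
  "walk_edges (x # y # ys) = (x, y) # walk_edges (y # ys)"
| "walk_edges _ = []"

lemma length_walk_edges: "length (walk_edges xs) = length xs - 1"
  by (induction xs rule: walk_edges.induct) auto

lemma set_walk_edges_subset: "set (walk_edges xs) \<subseteq> set xs \<times> set xs"
  by (induction xs rule: walk_edges.induct) auto

lemma distinct_walk_edges: "distinct xs \<Longrightarrow> distinct (walk_edges xs)"
  using set_walk_edges_subset by (induction xs rule: walk_edges.induct) fastforce+

lemma swap_notin_walk_edges:
  "distinct xs \<Longrightarrow> (x, y) \<in> set (walk_edges xs) \<Longrightarrow> (y, x) \<notin> set (walk_edges xs)"
proof (induction xs rule: walk_edges.induct)
  case (1 x y ys)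
  then show ?case using set_walk_edges_subset[of "y # ys"] by auto
qed auto

lemma walk_edges_snoc: "xs \<noteq> [] \<Longrightarrow> walk_edges (xs @ [y]) = walk_edges xs @ [(last xs, y)]"
  by (induction xs rule: walk_edges.induct) auto

lemma set_walk_edges_append:
  "set (walk_edges (xs @ y # ys)) = set (walk_edges (xs @ [y])) \<union> set (walk_edges (y # ys))"
  by (induction xs rule: walk_edges.induct) (auto simp: neq_Nil_conv)

lemma walk_iff_walk_edges:
  "walk V E xs \<longleftrightarrow> xs \<noteq> [] \<and> set xs \<subseteq> V \<and> (\<forall>(x, y)\<in>set (walk_edges xs). adj E x y)"
proof -
  have "(\<forall>i. Suc i < length xs \<longrightarrow> adj E (xs ! i) (xs ! Suc i)) \<longleftrightarrow>
        (\<forall>(x, y)\<in>set (walk_edges xs). adj E x y)"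
    by (induction xs rule: walk_edges.induct) (auto simp: All_less_Suc2)
  then show ?thesis unfolding walk_def by blast
qed

lemma walk_imp_distinct_walk:
  assumes "walk V E xs"
  obtains ys where "walk V E ys" "distinct ys" "hd ys = hd xs" "last ys = last xs"
    "length ys \<le> length xs"
  using assms
proof (induction "length xs" arbitrary: xs rule: less_induct)
  case less
  show ?case
  proof (cases "distinct xs")
    case False
    then obtain as z bs cs where xs: "xs = as @ [z] @ bs @ [z] @ cs"
      using not_distinct_decomp by blast
    define zs where "zs = as @ [z] @ cs"
    have "set (walk_edges zs) \<subseteq> set (walk_edges xs)"
      unfolding zs_def xs
      using set_walk_edges_append[of as z cs] set_walk_edges_append[of as z "bs @ [z] @ cs"]
        set_walk_edges_append[of "as @ [z] @ bs" z cs]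
      by auto
    then have "walk V E zs"
      using less.prems(2) unfolding walk_iff_walk_edges zs_def xs by auto
    moreover have "hd zs = hd xs" "last zs = last xs" unfolding zs_def xs by (cases as; simp)+
    moreover have "length zs < length xs" unfolding zs_def xs by simp
    ultimately show ?thesis using less.hyps[of zs] less.prems(1) by fastforce
  qed (use less.prems in blast)
qed

lemma walk_length_graph_dist:
  assumes "connected_graph V E" "x \<in> V" "y \<in> V"
  obtains xs where "walk V E xs" "hd xs = x" "last xs = y" "length xs = Suc (graph_dist V E x y)"
proof -
  obtain xs where "walk V E xs" "hd xs = x" "last xs = y"
    using assms unfolding connected_graph_def by blast
  then have "\<exists>n xs. walk V E xs \<and> hd xs = x \<and> last xs = y \<and> length xs = Suc n"
    by (metis Suc_pred length_greater_0_conv walk_def)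
  from LeastI_ex[OF this] that show ?thesis unfolding graph_dist_def by blast
qed

lemma graph_dist_le_diameter:
  assumes "finite V" "x \<in> V" "y \<in> V"
  shows "graph_dist V E x y \<le> diameter V E"
proof -
  have "{graph_dist V E x y | x y. x \<in> V \<and> y \<in> V} = (\<lambda>(x, y). graph_dist V E x y) ` (V \<times> V)"
    by auto
  then show ?thesis
    unfolding diameter_def using assms by (intro Max_ge) auto
qed

lemma adj_sym: "adj E x y \<longleftrightarrow> adj E y x"
  by (simp add: adj_def insert_commute)

lemma simple_graph_adj_neq: "simple_graph V E \<Longrightarrow> adj E x y \<Longrightarrow> x \<noteq> y"
  unfolding simple_graph_def adj_def by (metis doubleton_eq_iff insert_absorb2)

lemma distinct_walk_le_diameter:
  assumes "simple_graph V E" "connected_graph V E" "u \<in> V" "v \<in> V"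
  obtains P where "walk V E P" "distinct P" "hd P = u" "last P = v"
    "length P \<le> Suc (diameter V E)"
proof -
  obtain P0 where P0: "walk V E P0" "hd P0 = u" "last P0 = v"
    "length P0 = Suc (graph_dist V E u v)"
    by (rule walk_length_graph_dist[OF assms(2-4)])
  obtain P where P: "walk V E P" "distinct P" "hd P = u" "last P = v" "length P \<le> length P0"
    by (rule walk_imp_distinct_walk[OF P0(1), unfolded P0(2,3)])
  have "graph_dist V E u v \<le> diameter V E"
    using assms(1) by (intro graph_dist_le_diameter assms(3,4)) (simp add: simple_graph_def)
  with P P0(4) show ?thesis using that by simp
qed

text \<open>Extend a short path from \<open>u\<close> to \<open>v\<close> by the edge \<open>vw\<close>; if the path already passes
  through \<open>w\<close>, cut it there and end with the edge \<open>wv\<close> instead.\<close>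

lemma distinct_walk_to_edge:
  assumes "simple_graph V E" "connected_graph V E" "u \<in> V" "v \<in> V" "w \<in> V" "adj E v w"
  obtains xs a b where "walk V E (xs @ [a, b])" "distinct (xs @ [a, b])" "hd (xs @ [a]) = u"
    "{a, b} = {v, w}" "length xs \<le> diameter V E"
proof -
  obtain P where P: "walk V E P" "distinct P" "hd P = u" "last P = v"
    and len: "length P \<le> Suc (diameter V E)"
    by (rule distinct_walk_le_diameter[OF assms(1-4)])
  have P_ne: "P \<noteq> []" and P_V: "set P \<subseteq> V" and P_adj: "\<forall>(x, y)\<in>set (walk_edges P). adj E x y"
    using P(1) unfolding walk_iff_walk_edges by blast+
  show ?thesis
  proof (cases "w \<in> set P")
    case False
    define xs where "xs = butlast P"
    have P_eq: "P = xs @ [v]" unfolding xs_def using P_ne P(4) by (metis append_butlast_last_id)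
    have "walk V E (P @ [w])"
      unfolding walk_iff_walk_edges using P_V P_adj P(4) P_ne assms(5,6)
      by (simp add: walk_edges_snoc)
    moreover have "distinct (P @ [w])" using P(2) False by simp
    moreover have "length xs \<le> diameter V E" using len P_eq by simp
    ultimately show ?thesis using P(3) unfolding P_eq by (intro that[of xs v w]) simp_all
  next
    case True
    then obtain A B where P_split: "P = A @ w # B" by (meson split_list)
    have "v \<noteq> w" using simple_graph_adj_neq[OF assms(1,6)] .
    then have "B \<noteq> []" using P(4) P_split by auto
    then have "last B = v" using P(4) P_split by simp
    then have "v \<in> set B" using \<open>B \<noteq> []\<close> by auto
    have "set (walk_edges (A @ [w])) \<subseteq> set (walk_edges P)"
      using set_walk_edges_append[of A w B] P_split by simp
    then have "\<forall>(x, y)\<in>set (walk_edges (A @ [w, v])). adj E x y"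
      using P_adj adj_sym[of E v w] assms(6) walk_edges_snoc[of "A @ [w]" v] by auto
    moreover have "set (A @ [w, v]) \<subseteq> V" using P_V P_split assms(4) by auto
    ultimately have "walk V E (A @ [w, v])" unfolding walk_iff_walk_edges by simp
    moreover have "distinct (A @ [w, v])" using P(2) \<open>v \<in> set B\<close> P_split by auto
    moreover have "hd (A @ [w]) = u" using P(3) P_split by (cases A) auto
    moreover have "length A \<le> diameter V E" using len P_split \<open>B \<noteq> []\<close> by (cases B) auto
    ultimately show ?thesis by (intro that[of A w v]) (auto simp: insert_commute)
  qed
qed

lemma phi_p_mult_self: "phi_p p t * t = \<bar>t\<bar> powr p"
proof (cases "t = 0")
  case False
  then have "t * t = \<bar>t\<bar> powr 2" by (simp add: powr_numeral flip: power2_eq_square)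
  then have "\<bar>t\<bar> powr (p - 2) * t * t = \<bar>t\<bar> powr (p - 2) * \<bar>t\<bar> powr 2"
    by (simp only: mult.assoc)
  also have "\<dots> = \<bar>t\<bar> powr (p - 2 + 2)" by (rule powr_add[symmetric])
  finally show ?thesis using False by (simp add: phi_p_def)
qed (simp add: phi_p_def)

lemma phi_p_mult_unit: "\<bar>c\<bar> = 1 \<Longrightarrow> phi_p p (c * t) = c * phi_p p t"
  by (cases "c = 1") (auto simp: phi_p_def abs_if split: if_splits)

lemma phi_p_minus: "phi_p p (- t) = - phi_p p t"
  using phi_p_mult_unit[of "-1" p t] by simp

lemma phi_p_mult_nonpos_iff: "phi_p p t * c \<le> 0 \<longleftrightarrow> t * c \<le> 0"
proof (cases "t = 0")
  case False
  then have "phi_p p t * c = \<bar>t\<bar> powr (p - 2) * (t * c)" and "\<bar>t\<bar> powr (p - 2) > 0"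
    by (simp_all add: phi_p_def)
  then show ?thesis by (metis mult_le_cancel_left_pos mult_zero_right)
qed (simp add: phi_p_def)

lemma powr_sum_le_card_powr_mult_sum_powr:
  fixes a :: "'b \<Rightarrow> real"
  assumes "finite S" "\<And>i. i \<in> S \<Longrightarrow> a i \<ge> 0" "p \<ge> 1"
  shows "(\<Sum>i\<in>S. a i) powr p \<le> real (card S) powr (p - 1) * (\<Sum>i\<in>S. a i powr p)"
proof -
  define S' where "S' = {i\<in>S. a i > 0}"
  have "finite S'" and "S' \<subseteq> S" using assms(1) unfolding S'_def by auto
  have sum_S': "(\<Sum>i\<in>S. a i) = (\<Sum>i\<in>S'. a i)"
    unfolding S'_def using assms by (intro sum.mono_neutral_right) (auto simp: order_less_le)
  have sum_powr_S': "(\<Sum>i\<in>S. a i powr p) = (\<Sum>i\<in>S'. a i powr p)"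
    unfolding S'_def using assms by (intro sum.mono_neutral_right) (auto simp: order_less_le)
  show ?thesis
  proof (cases "S' = {}")
    case False
    define k where "k = real (card S')"
    have "k > 0" unfolding k_def using False \<open>finite S'\<close> by (simp add: card_gt_0_iff)
    \<comment> \<open>Jensen with uniform weights; \<open>powr_convex\<close> needs positive arguments, hence \<open>S'\<close>\<close>
    have "(\<Sum>i\<in>S'. (1 / k) *\<^sub>R a i) powr p \<le> (\<Sum>i\<in>S'. (1 / k) * a i powr p)"
      using \<open>finite S'\<close> False powr_convex[OF assms(3)] \<open>k > 0\<close>
      by (intro convex_on_sum[where f = "\<lambda>x. x powr p"]) (auto simp: S'_def k_def)
    then have "(\<Sum>i\<in>S'. a i) powr p / k powr p \<le> (\<Sum>i\<in>S'. a i powr p) / k"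
      using \<open>k > 0\<close> by (simp add: powr_divide sum_nonneg S'_def
          flip: sum_divide_distrib sum_distrib_left)
    then have "(\<Sum>i\<in>S'. a i) powr p \<le> k powr (p - 1) * (\<Sum>i\<in>S'. a i powr p)"
      using \<open>k > 0\<close> by (simp add: field_simps powr_diff)
    also have "\<dots> \<le> real (card S) powr (p - 1) * (\<Sum>i\<in>S'. a i powr p)"
      unfolding k_def using card_mono[OF assms(1) \<open>S' \<subseteq> S\<close>] assms(3)
      by (intro mult_right_mono powr_mono2 sum_nonneg) auto
    finally show ?thesis using sum_S' sum_powr_S' by simp
  qed (simp add: sum_S' sum_powr_S')
qed

lemma abs_le_abs_diff_if_mult_nonpos: "(x::real) * y \<le> 0 \<Longrightarrow> \<bar>x\<bar> \<le> \<bar>x - y\<bar>"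
  by (auto simp: mult_le_0_iff)

lemma abs_hd_minus_abs_last_le_sum_walk_edges:
  fixes f :: "'a \<Rightarrow> real"
  assumes "xs \<noteq> []" "\<And>x y. (x, y) \<in> set (walk_edges xs) \<Longrightarrow> \<bar>s x y\<bar> = 1"
  shows "\<bar>f (hd xs)\<bar> - \<bar>f (last xs)\<bar> \<le> (\<Sum>(x, y)\<leftarrow>walk_edges xs. \<bar>f x - s x y * f y\<bar>)"
  using assms
proof (induction xs rule: walk_edges.induct)
  case (1 x y ys)
  have "\<bar>f x\<bar> \<le> \<bar>f x - s x y * f y\<bar> + \<bar>s x y * f y\<bar>" by linarith
  then have "\<bar>f x\<bar> - \<bar>f y\<bar> \<le> \<bar>f x - s x y * f y\<bar>" using "1.prems"(2) by (simp add: abs_mult)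
  then show ?case using 1 by simp
qed auto

abbreviation neighbours :: "'a set \<Rightarrow> 'a set set \<Rightarrow> 'a \<Rightarrow> 'a set" where
  "neighbours V E x \<equiv> {y \<in> V. adj E x y}"

lemma sum_neighbours_swap:
  assumes "finite V"
  shows "(\<Sum>x\<in>V. \<Sum>y\<in>neighbours V E x. F y x) = (\<Sum>x\<in>V. \<Sum>y\<in>neighbours V E x. F x y)"
proof -
  have "(\<Sum>x\<in>V. \<Sum>y\<in>neighbours V E x. F y x) = (\<Sum>y\<in>V. \<Sum>x\<in>{x \<in> V. adj E x y}. F y x)"
    using sum.swap_restrict[OF assms assms, of "\<lambda>x y. F y x" "adj E"] by simp
  also have "\<dots> = (\<Sum>x\<in>V. \<Sum>y\<in>neighbours V E x. F x y)"
    using adj_sym[of E] by simp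
  finally show ?thesis .
qed

lemma sum_walk_edges_le_sum_neighbours:
  fixes G :: "'a \<Rightarrow> 'a \<Rightarrow> real"
  assumes "finite V" "walk V E xs" "distinct xs"
    and G_sym: "\<And>x y. adj E x y \<Longrightarrow> G y x = G x y" and G_nonneg: "\<And>x y. G x y \<ge> 0"
  shows "2 * (\<Sum>(x, y)\<in>set (walk_edges xs). G x y) \<le> (\<Sum>x\<in>V. \<Sum>y\<in>neighbours V E x. G x y)"
proof -
  define P where "P = set (walk_edges xs)"
  have P_adj: "adj E x y" and P_V: "x \<in> V" "y \<in> V" if "(x, y) \<in> P" for x y
    using that assms(2) set_walk_edges_subset[of xs] unfolding P_def walk_iff_walk_edges by auto
  have disjoint: "P \<inter> prod.swap ` P = {}"
    using swap_notin_walk_edges[OF assms(3)] unfolding P_def by auto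
  have "(\<Sum>(x, y)\<in>prod.swap ` P. G x y) = (\<Sum>(x, y)\<in>P. G y x)"
    by (subst sum.reindex) (auto simp: inj_on_def case_prod_beta)
  also have "\<dots> = (\<Sum>(x, y)\<in>P. G x y)"
    using G_sym P_adj by (intro sum.cong) auto
  finally have "2 * (\<Sum>(x, y)\<in>P. G x y) = (\<Sum>(x, y)\<in>P \<union> prod.swap ` P. G x y)"
    using sum.union_disjoint[OF _ _ disjoint, of "\<lambda>(x, y). G x y"] unfolding P_def by simp
  also have "\<dots> \<le> (\<Sum>(x, y)\<in>Sigma V (neighbours V E). G x y)"
    using assms(1) P_adj P_V G_nonneg adj_sym[of E]
    by (intro sum_mono2 finite_SigmaI) (auto simp: case_prod_beta)
  also have "\<dots> = (\<Sum>x\<in>V. \<Sum>y\<in>neighbours V E x. G x y)"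
    using assms(1) by (simp add: sum.Sigma)
  finally show ?thesis unfolding P_def .
qed

locale p_laplacian_eigenpair =
  fixes V :: "'a set" and E :: "'a set set" and \<sigma> :: "'a set \<Rightarrow> real"
    and p lam :: real and f :: "'a \<Rightarrow> real"
  assumes graph: "simple_graph V E" and sig: "signature E \<sigma>" and p_gt_1: "p > 1"
    and eigen_eq: "\<And>x. x \<in> V \<Longrightarrow> - signed_p_laplacian V E \<sigma> p f x = lam * phi_p p (f x)"
begin

lemma finite_V: "finite V"
  using graph by (simp add: simple_graph_def)

lemma abs_sig: "adj E x y \<Longrightarrow> \<bar>\<sigma> {x, y}\<bar> = 1"
  using sig by (force simp: signature_def adj_def)

lemma signed_diff_swap:
  assumes "adj E x y"
  shows "g y - \<sigma> {y, x} * g x = - \<sigma> {x, y} * (g x - \<sigma> {x, y} * g y)"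
proof -
  have "\<sigma> {x, y} * \<sigma> {x, y} = 1" using abs_sig[OF assms] by (metis abs_mult_self_eq mult_1)
  then show ?thesis by (simp add: insert_commute algebra_simps flip: mult.assoc)
qed

lemma sum_phi_p_neighbours:
  assumes "x \<in> V"
  shows "(\<Sum>y\<in>neighbours V E x. phi_p p (f x - \<sigma> {x, y} * f y))
    = lam * degree V E x * phi_p p (f x)"
proof (cases "degree V E x = 0")
  case True
  then have no_neighbours: "neighbours V E x = {}" using finite_V by (simp add: degree_def)
  show ?thesis unfolding no_neighbours using True by simp
next
  case False
  have "(\<Sum>y\<in>neighbours V E x. phi_p p (f x - \<sigma> {x, y} * f y))
      = - (\<Sum>y\<in>neighbours V E x. phi_p p (\<sigma> {x, y} * f y - f x))"
    by (simp flip: sum_negf phi_p_minus)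
  also have "\<dots> = degree V E x * (- signed_p_laplacian V E \<sigma> p f x)"
    using False by (simp add: signed_p_laplacian_def)
  finally show ?thesis using eigen_eq[OF assms] by simp
qed

lemma energy_eq:
  "(\<Sum>x\<in>V. \<Sum>y\<in>neighbours V E x. \<bar>f x - \<sigma> {x, y} * f y\<bar> powr p)
    = 2 * lam * (\<Sum>x\<in>V. degree V E x * \<bar>f x\<bar> powr p)"
proof -
  define F where "F x y = f x * phi_p p (f x - \<sigma> {x, y} * f y)" for x y
  have F_pair: "F x y + F y x = \<bar>f x - \<sigma> {x, y} * f y\<bar> powr p" if "adj E x y" for x y
  proof -
    have "F y x = - \<sigma> {x, y} * f y * phi_p p (f x - \<sigma> {x, y} * f y)"
      using phi_p_mult_unit[of "- \<sigma> {x, y}" p] abs_sig[OF that]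
      by (simp add: F_def signed_diff_swap[OF that])
    then have "F x y + F y x = phi_p p (f x - \<sigma> {x, y} * f y) * (f x - \<sigma> {x, y} * f y)"
      by (simp add: F_def algebra_simps)
    then show ?thesis by (simp add: phi_p_mult_self)
  qed
  have "(\<Sum>x\<in>V. \<Sum>y\<in>neighbours V E x. F x y)
      = (\<Sum>x\<in>V. f x * (\<Sum>y\<in>neighbours V E x. phi_p p (f x - \<sigma> {x, y} * f y)))"
    by (simp add: F_def sum_distrib_left)
  also have "\<dots> = (\<Sum>x\<in>V. lam * (degree V E x * (phi_p p (f x) * f x)))"
    by (intro sum.cong refl) (simp add: sum_phi_p_neighbours)
  also have "\<dots> = lam * (\<Sum>x\<in>V. degree V E x * \<bar>f x\<bar> powr p)"
    by (simp add: phi_p_mult_self sum_distrib_left)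
  finally have sum_F: "(\<Sum>x\<in>V. \<Sum>y\<in>neighbours V E x. F x y)
      = lam * (\<Sum>x\<in>V. degree V E x * \<bar>f x\<bar> powr p)" .
  have "(\<Sum>x\<in>V. \<Sum>y\<in>neighbours V E x. \<bar>f x - \<sigma> {x, y} * f y\<bar> powr p)
      = (\<Sum>x\<in>V. \<Sum>y\<in>neighbours V E x. F x y + F y x)"
    using F_pair by (intro sum.cong refl) simp
  also have "\<dots> = 2 * lam * (\<Sum>x\<in>V. degree V E x * \<bar>f x\<bar> powr p)"
    using sum_F sum_neighbours_swap[OF finite_V, of F] by (simp add: sum.distrib)
  finally show ?thesis .
qed

lemma isolated_vertex_imp_eq_0:
  assumes "lam \<noteq> 0" "x \<in> V" "neighbours V E x = {}"
  shows "f x = 0"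
proof -
  have "signed_p_laplacian V E \<sigma> p f x = 0"
    unfolding signed_p_laplacian_def assms(3) by simp
  then have "lam * phi_p p (f x) = 0" using eigen_eq[OF assms(2)] by simp
  then show ?thesis using assms(1) by (simp add: phi_p_def split: if_splits)
qed

lemma degree_pos_if_nonzero:
  assumes "lam \<noteq> 0" "x \<in> V" "f x \<noteq> 0"
  shows "degree V E x > 0"
  using isolated_vertex_imp_eq_0[OF assms(1,2)] assms(3) finite_V
  by (auto simp: degree_def card_gt_0_iff)

lemma eigenvalue_pos:
  assumes "lam \<noteq> 0" "x\<^sub>0 \<in> V" "f x\<^sub>0 \<noteq> 0"
  shows "lam > 0"
proof -
  have "0 < degree V E x\<^sub>0 * \<bar>f x\<^sub>0\<bar> powr p"
    using degree_pos_if_nonzero[OF assms] assms(3) by simp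
  also have "\<dots> \<le> (\<Sum>x\<in>V. degree V E x * \<bar>f x\<bar> powr p)"
    using assms(2) finite_V by (intro member_le_sum) auto
  finally have "0 < (\<Sum>x\<in>V. degree V E x * \<bar>f x\<bar> powr p)" .
  moreover have "0 \<le> 2 * lam * (\<Sum>x\<in>V. degree V E x * \<bar>f x\<bar> powr p)"
    unfolding energy_eq[symmetric] by (intro sum_nonneg) simp
  ultimately show ?thesis using assms(1) by (simp add: zero_le_mult_iff)
qed

text \<open>If \<open>\<sigma>\<^sub>x\<^sub>y f(x) f(y) > 0\<close> on every edge, look at a non-isolated vertex \<open>x\<close> where \<open>\<bar>f\<bar>\<close> is
  minimal: every term \<open>\<phi>\<^sub>p(f(x) - \<sigma>\<^sub>x\<^sub>y f(y))\<close> vanishes or has sign opposite to \<open>f(x)\<close>, whereas the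
  eigenvalue equation gives their sum the sign of \<open>\<lambda> f(x)\<close>.\<close>

lemma exists_frustrated_edge:
  assumes "lam > 0" "x\<^sub>0 \<in> V" "f x\<^sub>0 \<noteq> 0"
  shows "\<exists>v\<in>V. \<exists>w\<in>V. adj E v w \<and> \<sigma> {v, w} * f v * f w \<le> 0"
proof (rule ccontr)
  assume "\<not> ?thesis"
  then have balanced: "\<sigma> {x, y} * f x * f y > 0" if "x \<in> V" "y \<in> neighbours V E x" for x y
    using that by force
  define U where "U = {x \<in> V. neighbours V E x \<noteq> {}}"
  have "finite U" unfolding U_def using finite_V by simp
  have "x\<^sub>0 \<in> U"
    using isolated_vertex_imp_eq_0[of x\<^sub>0] assms unfolding U_def by auto
  then obtain x where "is_arg_min (\<lambda>x. \<bar>f x\<bar>) (\<lambda>x. x \<in> U) x"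
    using ex_is_arg_min_if_finite[OF \<open>finite U\<close>] by blast
  then have "x \<in> U" and x_min: "\<And>y. y \<in> U \<Longrightarrow> \<bar>f x\<bar> \<le> \<bar>f y\<bar>"
    by (simp_all add: is_arg_min_linorder)
  then have "x \<in> V" and "neighbours V E x \<noteq> {}" unfolding U_def by auto
  then obtain y where "y \<in> neighbours V E x" by blast
  then have "f x \<noteq> 0" using balanced[OF \<open>x \<in> V\<close>] by fastforce
  have "phi_p p (f x - \<sigma> {x, y} * f y) * f x \<le> 0" if "y \<in> neighbours V E x" for y
  proof -
    have "y \<in> U" using that \<open>x \<in> V\<close> adj_sym[of E x y] unfolding U_def by auto
    have "f x * f x = \<bar>f x\<bar> * \<bar>f x\<bar>" by simp
    also have "\<dots> \<le> \<bar>f x\<bar> * \<bar>f y\<bar>" by (rule mult_left_mono[OF x_min[OF \<open>y \<in> U\<close>] abs_ge_zero])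
    also have "\<dots> = \<bar>\<sigma> {x, y} * f x * f y\<bar>" using abs_sig[of x y] that by (simp add: abs_mult)
    also have "\<dots> = \<sigma> {x, y} * f x * f y" using balanced[OF \<open>x \<in> V\<close> that] by simp
    finally have "(f x - \<sigma> {x, y} * f y) * f x \<le> 0" by (simp add: algebra_simps)
    then show ?thesis by (simp only: phi_p_mult_nonpos_iff)
  qed
  then have "(\<Sum>y\<in>neighbours V E x. phi_p p (f x - \<sigma> {x, y} * f y)) * f x \<le> 0"
    unfolding sum_distrib_right by (intro sum_nonpos) blast
  moreover have "lam * degree V E x * phi_p p (f x) * f x > 0"
    using assms(1) degree_pos_if_nonzero[OF _ \<open>x \<in> V\<close> \<open>f x \<noteq> 0\<close>] \<open>f x \<noteq> 0\<close>
    by (simp add: phi_p_mult_self mult.assoc)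
  ultimately show False using sum_phi_p_neighbours[OF \<open>x \<in> V\<close>] by simp
qed

lemma abs_powr_le_frustrated_walk_energy:
  assumes "walk V E (xs @ [a, b])" "distinct (xs @ [a, b])" "\<sigma> {a, b} * f a * f b \<le> 0"
  shows "\<bar>f (hd (xs @ [a]))\<bar> powr p
    \<le> real (Suc (length xs)) powr (p - 1) * lam * (\<Sum>x\<in>V. degree V E x * \<bar>f x\<bar> powr p)"
proof -
  define g where "g x y = \<bar>f x - \<sigma> {x, y} * f y\<bar>" for x y
  define P where "P = walk_edges (xs @ [a, b])"
  have P_snoc: "P = walk_edges (xs @ [a]) @ [(a, b)]"
    unfolding P_def using walk_edges_snoc[of "xs @ [a]" b] by simp
  have P_adj: "adj E x y" if "(x, y) \<in> set P" for x y
    using assms(1) that unfolding walk_iff_walk_edges P_def by auto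
  have "distinct P" unfolding P_def by (rule distinct_walk_edges[OF assms(2)])
  then have card_P: "card (set P) = Suc (length xs)"
    unfolding P_def by (simp add: distinct_card length_walk_edges)
  have "\<bar>f (hd (xs @ [a]))\<bar> - \<bar>f a\<bar> \<le> (\<Sum>(x, y)\<leftarrow>walk_edges (xs @ [a]). g x y)"
    unfolding g_def using abs_hd_minus_abs_last_le_sum_walk_edges[of "xs @ [a]" "\<lambda>x y. \<sigma> {x, y}"]
      abs_sig P_adj unfolding P_snoc by auto
  moreover have "\<bar>f a\<bar> \<le> g a b"
  proof -
    have "f a * (\<sigma> {a, b} * f b) \<le> 0" using assms(3) by (simp add: mult_ac)
    then show ?thesis unfolding g_def by (rule abs_le_abs_diff_if_mult_nonpos)
  qed
  ultimately have "\<bar>f (hd (xs @ [a]))\<bar> \<le> (\<Sum>(x, y)\<in>set P. g x y)"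
    using sum_list_distinct_conv_sum_set[OF \<open>distinct P\<close>, of "\<lambda>(x, y). g x y"]
    unfolding P_snoc by simp
  then have "\<bar>f (hd (xs @ [a]))\<bar> powr p \<le> (\<Sum>(x, y)\<in>set P. g x y) powr p"
    using p_gt_1 by (intro powr_mono2) auto
  also have "\<dots> \<le> real (Suc (length xs)) powr (p - 1) * (\<Sum>(x, y)\<in>set P. g x y powr p)"
    using powr_sum_le_card_powr_mult_sum_powr[of "set P" "\<lambda>(x, y). g x y" p] p_gt_1 card_P
    by (simp add: g_def case_prod_beta)
  also have "\<dots> \<le> real (Suc (length xs)) powr (p - 1) * (lam * (\<Sum>x\<in>V. degree V E x * \<bar>f x\<bar> powr p))"
  proof -
    have "2 * (\<Sum>(x, y)\<in>set P. g x y powr p) \<le> (\<Sum>x\<in>V. \<Sum>y\<in>neighbours V E x. g x y powr p)"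
      unfolding P_def using finite_V assms(1,2)
    proof (rule sum_walk_edges_le_sum_neighbours)
      show "g y x powr p = g x y powr p" if "adj E x y" for x y
        using abs_sig[OF that] by (simp add: g_def signed_diff_swap[OF that] abs_mult)
    qed simp
    then show ?thesis unfolding g_def energy_eq by (intro mult_left_mono) auto
  qed
  finally show ?thesis by (simp add: mult.assoc)
qed

lemma abs_powr_le_diameter_energy:
  assumes "connected_graph V E" "lam \<noteq> 0" "x\<^sub>0 \<in> V" "f x\<^sub>0 \<noteq> 0" "u \<in> V"
  shows "\<bar>f u\<bar> powr p
    \<le> real (diameter V E + 1) powr (p - 1) * lam * (\<Sum>x\<in>V. degree V E x * \<bar>f x\<bar> powr p)"
proof -
  have "lam > 0" using eigenvalue_pos assms(2-4) .
  then obtain v w where "v \<in> V" "w \<in> V" "adj E v w" and frustrated: "\<sigma> {v, w} * f v * f w \<le> 0"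
    using exists_frustrated_edge assms(3,4) by blast
  obtain xs a b where walk: "walk V E (xs @ [a, b])" "distinct (xs @ [a, b])" "hd (xs @ [a]) = u"
    and "{a, b} = {v, w}" and len: "length xs \<le> diameter V E"
    using distinct_walk_to_edge[OF graph assms(1,5) \<open>v \<in> V\<close> \<open>w \<in> V\<close> \<open>adj E v w\<close>] .
  then have "\<sigma> {a, b} * f a * f b \<le> 0"
    using frustrated by (auto simp: doubleton_eq_iff insert_commute mult_ac)
  from abs_powr_le_frustrated_walk_energy[OF walk(1,2) this]
  have "\<bar>f u\<bar> powr p
      \<le> real (Suc (length xs)) powr (p - 1) * lam * (\<Sum>x\<in>V. degree V E x * \<bar>f x\<bar> powr p)"
    unfolding walk(3) .
  also have "\<dots> \<le> real (diameter V E + 1) powr (p - 1) * lam * (\<Sum>x\<in>V. degree V E x * \<bar>f x\<bar> powr p)"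
    using len p_gt_1 \<open>lam > 0\<close> by (intro mult_right_mono) (auto intro!: powr_mono2 sum_nonneg)
  finally show ?thesis .
qed

end

lemma sum_degree_mult_powr_le_volume:
  fixes f :: "'a \<Rightarrow> real"
  assumes "\<And>x. x \<in> V \<Longrightarrow> \<bar>f x\<bar> \<le> M" "p \<ge> 0"
  shows "(\<Sum>x\<in>V. degree V E x * \<bar>f x\<bar> powr p) \<le> M powr p * volume V E"
proof -
  have "(\<Sum>x\<in>V. degree V E x * \<bar>f x\<bar> powr p) \<le> (\<Sum>x\<in>V. degree V E x * M powr p)"
    using assms by (intro sum_mono mult_left_mono powr_mono2) auto
  also have "\<dots> = M powr p * volume V E"
    by (simp add: volume_def sum_distrib_left mult.commute)
  finally show ?thesis .
qed

theorem theorem4p2: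
  fixes V :: "'a set" and E :: "'a set set" and \<sigma> :: "'a set \<Rightarrow> real"
    and p lam :: real
  assumes "simple_graph V E"
    and "connected_graph V E"
    and "signature E \<sigma>"
    and "p > 1"
    and "is_eigenvalue V E \<sigma> p lam"
    and "lam \<noteq> 0"
  shows "lam \<ge> 1 / (real (diameter V E + 1) powr (p - 1) * real (volume V E))"
proof -
  obtain f where "\<exists>x\<in>V. f x \<noteq> 0"
    and "\<forall>x\<in>V. - signed_p_laplacian V E \<sigma> p f x = lam * phi_p p (f x)"
    using assms(5) unfolding is_eigenvalue_def by blast
  then interpret p_laplacian_eigenpair V E \<sigma> p lam f
    using assms(1,3,4) by unfold_locales auto
  obtain x\<^sub>0 where "x\<^sub>0 \<in> V" "f x\<^sub>0 \<noteq> 0" using \<open>\<exists>x\<in>V. f x \<noteq> 0\<close> by blast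
  obtain u where "is_arg_min (\<lambda>x. - \<bar>f x\<bar>) (\<lambda>x. x \<in> V) u"
    using ex_is_arg_min_if_finite[OF finite_V] \<open>x\<^sub>0 \<in> V\<close> by blast
  then have "u \<in> V" and u_max: "\<And>x. x \<in> V \<Longrightarrow> \<bar>f x\<bar> \<le> \<bar>f u\<bar>"
    by (simp_all add: is_arg_min_linorder)
  define K where "K = real (diameter V E + 1) powr (p - 1)"
  have "lam > 0" using eigenvalue_pos assms(6) \<open>x\<^sub>0 \<in> V\<close> \<open>f x\<^sub>0 \<noteq> 0\<close> .
  have "\<bar>f u\<bar> powr p \<le> K * lam * (\<Sum>x\<in>V. degree V E x * \<bar>f x\<bar> powr p)"
    unfolding K_def
    by (rule abs_powr_le_diameter_energy) (use assms \<open>x\<^sub>0 \<in> V\<close> \<open>f x\<^sub>0 \<noteq> 0\<close> \<open>u \<in> V\<close> in auto)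
  also have "\<dots> \<le> K * lam * (\<bar>f u\<bar> powr p * volume V E)"
    using sum_degree_mult_powr_le_volume[of V f "\<bar>f u\<bar>" p] u_max p_gt_1 \<open>lam > 0\<close>
    by (intro mult_left_mono) (auto simp: K_def)
  finally have "\<bar>f u\<bar> powr p * 1 \<le> \<bar>f u\<bar> powr p * (K * volume V E * lam)"
    by (simp add: mult_ac)
  moreover have "\<bar>f u\<bar> powr p > 0" using u_max[OF \<open>x\<^sub>0 \<in> V\<close>] \<open>f x\<^sub>0 \<noteq> 0\<close> by simp
  ultimately have "1 \<le> K * volume V E * lam" by (simp only: mult_le_cancel_left_pos)
  moreover have "K * volume V E \<ge> 0" by (simp add: K_def)
  ultimately have "K * volume V E > 0" by (metis less_eq_real_def mult_zero_left not_one_le_zero)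
  with \<open>1 \<le> K * volume V E * lam\<close> show ?thesis
    unfolding K_def[symmetric] by (simp add: pos_divide_le_eq mult_ac)
qed

end
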